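(* Let $\beta\in(3/2,\beta^*]$, let $\vec z\in S_\beta$ and let $\vec z=\sum_{i=1}^\infty a_i\beta^{-i}$ with $a_i\in\{\vec q_0,\vec q_1,\vec q_2\}$. Then: (i) if $\vec z\in E_i$ for some $i\in\{0,1,2\}$, then $a_1=\vec q_i$; (ii) if $\vec z\in C_{ij}$ for some $ij\in\{01,12,02\}$, then $a_1\in\{\vec q_i,\vec q_j\}$.
   Context: $\beta^*\approx1.5437$ is the real root of $x^3-2x^2+2x=2$. $\vec q_0=(0,0)$, $\vec q_1=(1,0)$, $\vec q_2=(0,1)$, $f_{\vec q_i}(\vec z)=(\vec z+\vec q_i)/\beta$ (write $f_i=f_{\vec q_i}$), $S_\beta$ the attractor of this IFS. $H=\{(x,y):x<\frac1\beta,\ y<\frac1\beta,\ x+y>\frac{1}{\beta(\beta-1)}\}$. Define $\tilde E_0=([0,\frac1\beta)\times[0,\frac1\beta))\setminus H$; $\tilde E_1=\{0\le y<\frac1\beta,\ \frac{1}{\beta(\beta-1)}<x+y\le\frac1{\beta-1}\}\setminus H$; $\tilde E_2=\{0\le x<\frac1\beta,\ \frac{1}{\beta(\beta-1)}<x+y\le\frac1{\beta-1}\}\setminus H$; $\tilde C_{01}=\{x\ge\frac1\beta,\ y\ge0,\ x+y\le\frac{1}{\beta(\beta-1)}\}$; $\tilde C_{12}=\{x\ge\frac1\beta,\ y\ge\frac1\beta,\ x+y\le\frac1{\beta-1}\}$; $\tilde C_{02}=\{x\ge0,\ y\ge\frac1\beta,\ x+y\le\frac{1}{\beta(\beta-1)}\}$.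 For $\{i,j,k\}=\{0,1,2\}$ let $E_i=\bigl(\tilde E_i\cup\bigcup_{n\ge1}f_jf_i^n(H)\cup\bigcup_{n\ge1}f_kf_i^n(H)\bigr)\setminus\bigcup_{n\ge0}f_i^n(H)$, and for $ij\in\{01,12,02\}$ let $C_{ij}=\tilde C_{ij}\setminus\bigl(\bigcup_{n\ge1}f_if_j^n(H)\cup\bigcup_{n\ge1}f_jf_i^n(H)\bigr)$. *)

theory Defs
  imports "HOL-Analysis.Analysis"
begin

definition beta_star :: real where
  "beta_star = (THE x::real. x^3 - 2*x^2 + 2*x = 2)"

definition qv :: "nat \<Rightarrow> real \<times> real" where
  "qv i = (if i = 1 then (1, 0) else if i = 2 then (0, 1) else (0, 0))"

definition fmap :: "real \<Rightarrow> nat \<Rightarrow> real \<times> real \<Rightarrow> real \<times> real" where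
  "fmap \<beta> i z = (1 / \<beta>) *\<^sub>R (z + qv i)"

definition attractor :: "real \<Rightarrow> (real \<times> real) set" where
  "attractor \<beta> = (THE K. compact K \<and> K \<noteq> {} \<and> K = (\<Union>i\<in>{0,1,2}. fmap \<beta> i ` K))"

definition Hset :: "real \<Rightarrow> (real \<times> real) set" where
  "Hset \<beta> = {(x, y). x < 1/\<beta> \<and> y < 1/\<beta> \<and> x + y > 1/(\<beta>*(\<beta>-1))}"

definition Et :: "real \<Rightarrow> nat \<Rightarrow> (real \<times> real) set" where
  "Et \<beta> i =
    (if i = 0 then {(x, y). 0 \<le> x \<and> x < 1/\<beta> \<and> 0 \<le> y \<and> y < 1/\<beta>}
     else if i = 1 then {(x, y). 0 \<le> y \<and> y < 1/\<beta> \<and> 1/(\<beta>*(\<beta>-1)) < x + y \<and> x + y \<le> 1/(\<beta>-1)}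
     else {(x, y). 0 \<le> x \<and> x < 1/\<beta> \<and> 1/(\<beta>*(\<beta>-1)) < x + y \<and> x + y \<le> 1/(\<beta>-1)})
    - Hset \<beta>"

definition Ct :: "real \<Rightarrow> nat \<Rightarrow> nat \<Rightarrow> (real \<times> real) set" where
  "Ct \<beta> i j =
    (if (i, j) = (0, 1) then {(x, y). x \<ge> 1/\<beta> \<and> y \<ge> 0 \<and> x + y \<le> 1/(\<beta>*(\<beta>-1))}
     else if (i, j) = (1, 2) then {(x, y). x \<ge> 1/\<beta> \<and> y \<ge> 1/\<beta> \<and> x + y \<le> 1/(\<beta>-1)}
     else {(x, y). x \<ge> 0 \<and> y \<ge> 1/\<beta> \<and> x + y \<le> 1/(\<beta>*(\<beta>-1))})"

definition Eset :: "real \<Rightarrow> nat \<Rightarrow> (real \<times> real) set" where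
  "Eset \<beta> i =
    (Et \<beta> i \<union> (\<Union>j\<in>{0,1,2} - {i}. \<Union>n\<in>{1..}. fmap \<beta> j ` ((fmap \<beta> i ^^ n) ` Hset \<beta>)))
    - (\<Union>n. (fmap \<beta> i ^^ n) ` Hset \<beta>)"

definition Cset :: "real \<Rightarrow> nat \<Rightarrow> nat \<Rightarrow> (real \<times> real) set" where
  "Cset \<beta> i j =
    Ct \<beta> i j - ((\<Union>n\<in>{1..}. fmap \<beta> i ` ((fmap \<beta> j ^^ n) ` Hset \<beta>))
              \<union> (\<Union>n\<in>{1..}. fmap \<beta> j ` ((fmap \<beta> i ^^ n) ` Hset \<beta>)))"

end

theory Submission
  imports Defs
begin

text \<open>
  A point with an expansion \<open>z = \<Sum>\<^sub>i a\<^sub>i \<beta>\<^sup>-\<^sup>i\<close> lies in \<open>f\<^sub>k(T)\<close>, where \<open>a\<^sub>1 = q\<^sub>k\<close> and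
  \<open>T = {x, y \<ge> 0, x + y \<le> 1/(\<beta>-1)}\<close> contains all expansions. For each digit \<open>k\<close> the
  half-plane \<open>Q\<^sub>k\<close> (\<open>forbidden_region \<beta> k\<close>) is disjoint from \<open>f\<^sub>k(T)\<close>, contains \<open>H\<close> and is
  invariant under the two other maps \<open>f\<^sub>j\<close>. So a point of \<open>Q\<^sub>k\<close> has no expansion starting
  with \<open>k\<close>, and no point of \<open>f\<^sub>i\<^sup>n(H)\<close> has an expansion at all: its first digit would
  have to be \<open>i\<close>, and dropping it leads to \<open>f\<^sub>i\<^sup>n\<^sup>-\<^sup>1(H)\<close>. The pieces \<open>\<tilde>E\<^sub>i\<close> and \<open>\<tilde>C\<^sub>i\<^sub>j\<close> lie in
  \<open>Q\<^sub>k\<close> for every excluded digit \<open>k\<close> (for \<open>\<tilde>C\<^sub>i\<^sub>j\<close> this needs \<open>\<beta> > 3/2\<close>), and a point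
  \<open>f\<^sub>j(p)\<close> with \<open>p \<in> f\<^sub>i\<^sup>n(H)\<close> lies in \<open>Q\<^sub>k\<close> unless \<open>j = k\<close>, when \<open>p\<close> itself would have an
  expansion.
\<close>

definition beta_expansion :: "real \<Rightarrow> (nat \<Rightarrow> real \<times> real) \<Rightarrow> real \<times> real \<Rightarrow> bool" where
  "beta_expansion \<beta> a z \<longleftrightarrow>
     (\<forall>i\<ge>1. a i \<in> {qv 0, qv 1, qv 2}) \<and> (\<lambda>i. (1 / \<beta> ^ Suc i) *\<^sub>R a (Suc i)) sums z"

definition expansion_triangle :: "real \<Rightarrow> (real \<times> real) set" where
  "expansion_triangle \<beta> = {(x, y). 0 \<le> x \<and> 0 \<le> y \<and> x + y \<le> 1/(\<beta>-1)}"

definition forbidden_region :: "real \<Rightarrow> nat \<Rightarrow> (real \<times> real) set" where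
  "forbidden_region \<beta> k =
    (if k = 0 then {(x, y). x + y > 1/(\<beta>*(\<beta>-1))}
     else if k = 1 then {(x, y). x < 1/\<beta>}
     else {(x, y). y < 1/\<beta>})"

lemma fmap_Pair: "fmap \<beta> j (x, y) = ((x + fst (qv j)) / \<beta>, (y + snd (qv j)) / \<beta>)"
  by (cases "qv j") (simp add: fmap_def divide_inverse algebra_simps)

lemma fmap_eq_iff:
  assumes "\<beta> \<noteq> 0"
  shows "fmap \<beta> j p = z \<longleftrightarrow> p = \<beta> *\<^sub>R z - qv j"
proof
  show "fmap \<beta> j p = z \<Longrightarrow> p = \<beta> *\<^sub>R z - qv j"
    using assms by (auto simp: fmap_def)
  show "p = \<beta> *\<^sub>R z - qv j \<Longrightarrow> fmap \<beta> j p = z"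
    using assms by (simp add: fmap_def)
qed

lemma Hset_subset_forbidden_region: "Hset \<beta> \<subseteq> forbidden_region \<beta> k"
  by (auto simp: Hset_def forbidden_region_def)

lemma fmap_forbidden_region:
  assumes "1 < \<beta>" "j \<in> {0,1,2}" "k \<in> {0,1,2}" "j \<noteq> k" "p \<in> forbidden_region \<beta> k"
  shows "fmap \<beta> j p \<in> forbidden_region \<beta> k"
proof -
  obtain x y where p: "p = (x, y)" by fastforce
  have "1/\<beta> < 1" using assms(1) by simp
  consider "k = 0" "j \<in> {1,2}" | "k = 1" "j \<in> {0,2}" | "k = 2" "j \<in> {0,1}"
    using assms(2-4) by auto
  then show ?thesis
  proof cases
    case 1
    have "1/(\<beta>-1) = 1/(\<beta>*(\<beta>-1)) + 1/\<beta>"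
      using assms(1) by (simp add: field_simps)
    then have "x + y + 1 > 1/(\<beta>-1)"
      using assms(5) \<open>1/\<beta> < 1\<close> 1 p by (simp add: forbidden_region_def)
    then have "(x + y + 1)/\<beta> > (1/(\<beta>-1))/\<beta>"
      by (rule divide_strict_right_mono) (use assms(1) in simp)
    then have "(x + y + 1)/\<beta> > 1/(\<beta>*(\<beta>-1))"
      by (simp add: mult.commute)
    then show ?thesis
      using 1 p by (auto simp: forbidden_region_def fmap_Pair qv_def add_divide_distrib)
  next
    case 2
    then have "x < 1"
      using assms(5) \<open>1/\<beta> < 1\<close> p by (simp add: forbidden_region_def)
    then have "x / \<beta> < 1/\<beta>"
      using assms(1) by (intro divide_strict_right_mono) auto
    then show ?thesis using 2 p by (auto simp: forbidden_region_def fmap_Pair qv_def)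
  next
    case 3
    then have "y < 1"
      using assms(5) \<open>1/\<beta> < 1\<close> p by (simp add: forbidden_region_def)
    then have "y / \<beta> < 1/\<beta>"
      using assms(1) by (intro divide_strict_right_mono) auto
    then show ?thesis using 3 p by (auto simp: forbidden_region_def fmap_Pair qv_def)
  qed
qed

lemma fmap_iterate_Hset_subset_forbidden_region:
  assumes "1 < \<beta>" "i \<in> {0,1,2}" "k \<in> {0,1,2}" "i \<noteq> k"
  shows "(fmap \<beta> i ^^ n) ` Hset \<beta> \<subseteq> forbidden_region \<beta> k"
proof (induction n)
  case 0
  then show ?case using Hset_subset_forbidden_region by simp
next
  case (Suc n)
  then have "fmap \<beta> i ` (fmap \<beta> i ^^ n) ` Hset \<beta> \<subseteq> forbidden_region \<beta> k"
    using fmap_forbidden_region[OF assms] by blast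
  then show ?case by (simp add: image_comp)
qed

lemma fmap_expansion_triangle_notin_forbidden_region:
  assumes "0 < \<beta>" "k \<in> {0,1,2}" "w \<in> expansion_triangle \<beta>"
  shows "fmap \<beta> k w \<notin> forbidden_region \<beta> k"
proof -
  obtain x y where w: "w = (x, y)" "0 \<le> x" "0 \<le> y" "x + y \<le> 1/(\<beta>-1)"
    using assms(3) by (auto simp: expansion_triangle_def)
  have "(x + y)/\<beta> \<le> 1/(\<beta>*(\<beta>-1))"
    using divide_right_mono[OF w(4), of \<beta>] assms(1) by (simp add: mult.commute)
  moreover have "1/\<beta> \<le> (x + 1)/\<beta>" "1/\<beta> \<le> (y + 1)/\<beta>"
    using w assms(1) by (simp_all add: divide_right_mono)
  ultimately show ?thesis
    using assms(2) w(1) by (auto simp: forbidden_region_def fmap_Pair qv_def add_divide_distrib)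
qed

lemma beta_expansion_in_triangle:
  assumes "1 < \<beta>" "beta_expansion \<beta> a z"
  shows "z \<in> expansion_triangle \<beta>"
proof -
  let ?t = "\<lambda>i. (1 / \<beta> ^ Suc i) *\<^sub>R a (Suc i)"
  have digit: "0 \<le> fst (a (Suc i)) \<and> 0 \<le> snd (a (Suc i)) \<and> fst (a (Suc i)) + snd (a (Suc i)) \<le> 1"
    for i
  proof -
    have "a (Suc i) \<in> {qv 0, qv 1, qv 2}"
      using assms(2) by (simp add: beta_expansion_def)
    then show ?thesis by (auto simp: qv_def)
  qed
  have series: "?t sums z"
    using assms(2) unfolding beta_expansion_def by blast
  have fst_sums: "(\<lambda>i. fst (?t i)) sums fst z"
    by (rule bounded_linear.sums[OF bounded_linear_fst series])
  have snd_sums: "(\<lambda>i. snd (?t i)) sums snd z"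
    by (rule bounded_linear.sums[OF bounded_linear_snd series])
  have geometric: "(\<lambda>i. (1/\<beta>) * (1/\<beta>) ^ i) sums (1/(\<beta>-1))"
    using sums_mult[OF geometric_sums[of "1/\<beta>"], of "1/\<beta>"] assms(1) by (simp add: field_simps)
  have "0 \<le> fst z" "0 \<le> snd z"
    using sums_le[OF _ sums_zero fst_sums] sums_le[OF _ sums_zero snd_sums] digit assms(1) by auto
  moreover have "fst z + snd z \<le> 1/(\<beta>-1)"
  proof (rule sums_le[OF _ sums_add[OF fst_sums snd_sums] geometric])
    fix i
    have "(1 / \<beta> ^ Suc i) * (fst (a (Suc i)) + snd (a (Suc i))) \<le> 1 / \<beta> ^ Suc i"
      using digit[of i] assms(1) by (intro mult_left_le) auto
    then show "fst (?t i) + snd (?t i) \<le> (1/\<beta>) * (1/\<beta>) ^ i"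
      by (simp add: distrib_left power_one_over)
  qed
  ultimately show ?thesis by (cases z) (auto simp: expansion_triangle_def)
qed

lemma beta_expansion_Suc:
  assumes "0 < \<beta>" "beta_expansion \<beta> a z"
  shows "beta_expansion \<beta> (\<lambda>i. a (Suc i)) (\<beta> *\<^sub>R z - a 1)"
proof -
  have "(\<lambda>i. (1 / \<beta> ^ Suc (Suc i)) *\<^sub>R a (Suc (Suc i))) sums (z - (1/\<beta>) *\<^sub>R a 1)"
    using sums_Suc_iff[where f="\<lambda>i. (1 / \<beta> ^ Suc i) *\<^sub>R a (Suc i)"] assms(2)
    by (simp add: beta_expansion_def)
  from sums_scaleR_right[OF this, of \<beta>]
  have "(\<lambda>i. (1 / \<beta> ^ Suc i) *\<^sub>R a (Suc (Suc i))) sums (\<beta> *\<^sub>R z - a 1)"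
    using assms(1) by (simp add: algebra_simps)
  then show ?thesis using assms(2) by (simp add: beta_expansion_def)
qed

lemma beta_expansion_first_digit:
  assumes "beta_expansion \<beta> a z"
  obtains j where "j \<in> {0,1,2}" "a 1 = qv j"
  using assms by (auto simp: beta_expansion_def)

lemma beta_expansion_first_digit_not_forbidden:
  assumes "1 < \<beta>" "beta_expansion \<beta> a z" "k \<in> {0,1,2}" "z \<in> forbidden_region \<beta> k"
  shows "a 1 \<noteq> qv k"
proof
  assume first: "a 1 = qv k"
  have "\<beta> *\<^sub>R z - a 1 \<in> expansion_triangle \<beta>"
    using beta_expansion_in_triangle[OF assms(1) beta_expansion_Suc[OF _ assms(2)]] assms(1) by simp
  moreover have "fmap \<beta> k (\<beta> *\<^sub>R z - a 1) = z"
    using fmap_eq_iff[of \<beta> k "\<beta> *\<^sub>R z - a 1" z] first assms(1) by simp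
  ultimately show False
    using fmap_expansion_triangle_notin_forbidden_region[of \<beta> k] assms(1,3,4) by fastforce
qed

lemma beta_expansion_notin_fmap_iterate_Hset:
  assumes "1 < \<beta>" "i \<in> {0,1,2}"
  shows "beta_expansion \<beta> a z \<Longrightarrow> z \<notin> (fmap \<beta> i ^^ n) ` Hset \<beta>"
proof (induction n arbitrary: a z)
  case 0
  obtain j where "j \<in> {0,1,2}" "a 1 = qv j"
    using beta_expansion_first_digit[OF 0] .
  then have "z \<notin> forbidden_region \<beta> j"
    using beta_expansion_first_digit_not_forbidden[OF assms(1) 0] by blast
  then show ?case using Hset_subset_forbidden_region by auto
next
  case (Suc n)
  show ?case
  proof
    assume z: "z \<in> (fmap \<beta> i ^^ Suc n) ` Hset \<beta>"
    obtain j where j: "j \<in> {0,1,2}" "a 1 = qv j"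
      using beta_expansion_first_digit[OF Suc.prems] .
    have "j = i"
      using fmap_iterate_Hset_subset_forbidden_region[OF assms(1,2) j(1)] z
        beta_expansion_first_digit_not_forbidden[OF assms(1) Suc.prems j(1)] j(2) by blast
    obtain h where h: "h \<in> Hset \<beta>" "fmap \<beta> i ((fmap \<beta> i ^^ n) h) = z"
      using z by auto
    then have "(fmap \<beta> i ^^ n) h = \<beta> *\<^sub>R z - a 1"
      using fmap_eq_iff[of \<beta> i "(fmap \<beta> i ^^ n) h" z] assms(1) j(2) \<open>j = i\<close> by simp
    then have "\<beta> *\<^sub>R z - a 1 \<in> (fmap \<beta> i ^^ n) ` Hset \<beta>"
      using h(1) by (metis image_eqI)
    then show False
      using Suc.IH beta_expansion_Suc[OF _ Suc.prems] assms(1) by simp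
  qed
qed

lemma Et_subset_forbidden_region:
  "i \<in> {0,1,2} \<Longrightarrow> k \<in> {0,1,2} \<Longrightarrow> k \<noteq> i \<Longrightarrow> Et \<beta> i \<subseteq> forbidden_region \<beta> k"
  by (auto simp: Et_def forbidden_region_def)

lemma Ct_subset_forbidden_region:
  assumes "3/2 < \<beta>" "(i, j) \<in> {(0,1),(1,2),(0,2)}" "k \<in> {0,1,2} - {i, j}"
  shows "Ct \<beta> i j \<subseteq> forbidden_region \<beta> k"
proof -
  have "1/(\<beta>*(\<beta>-1)) < 2/\<beta>"
    using assms(1) by (simp add: field_simps)
  then show ?thesis
    using assms(2,3) by (auto simp: Ct_def forbidden_region_def)
qed

lemma beta_expansion_Eset_first_digit:
  assumes "1 < \<beta>" "beta_expansion \<beta> a z" "i \<in> {0,1,2}" "z \<in> Eset \<beta> i"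
  shows "a 1 = qv i"
proof (rule ccontr)
  assume "a 1 \<noteq> qv i"
  obtain k where k: "k \<in> {0,1,2}" "a 1 = qv k" "k \<noteq> i"
    using beta_expansion_first_digit[OF assms(2)] \<open>a 1 \<noteq> qv i\<close> by metis
  have not_forbidden: "z \<notin> forbidden_region \<beta> k"
    using beta_expansion_first_digit_not_forbidden[OF assms(1,2) k(1)] k(2) by blast
  from assms(4) consider "z \<in> Et \<beta> i"
    | j n p where "j \<in> {0,1,2}" "j \<noteq> i" "p \<in> (fmap \<beta> i ^^ n) ` Hset \<beta>" "z = fmap \<beta> j p"
    unfolding Eset_def by blast
  then show False
  proof cases
    case 1
    then show False using Et_subset_forbidden_region assms(3) k not_forbidden by blast
  next
    case (2 j n p)
    show False
    proof (cases "j = k")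
      case True
      then have "p = \<beta> *\<^sub>R z - a 1"
        using fmap_eq_iff[of \<beta> k p z] 2(4) k(2) assms(1) by simp
      then show False
        using 2(3) beta_expansion_notin_fmap_iterate_Hset[OF assms(1,3) beta_expansion_Suc[OF _ assms(2)]]
          assms(1) by auto
    next
      case False
      have "p \<in> forbidden_region \<beta> k"
        using 2(3) fmap_iterate_Hset_subset_forbidden_region[OF assms(1,3) k(1)] k(3) by auto
      then have "z \<in> forbidden_region \<beta> k"
        using fmap_forbidden_region[OF assms(1) 2(1) k(1) False] 2(4) by simp
      then show False using not_forbidden by blast
    qed
  qed
qed

lemma beta_expansion_Cset_first_digit:
  assumes "3/2 < \<beta>" "beta_expansion \<beta> a z" "(i, j) \<in> {(0,1),(1,2),(0,2)}" "z \<in> Cset \<beta> i j"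
  shows "a 1 \<in> {qv i, qv j}"
proof -
  obtain k where k: "k \<in> {0,1,2}" "a 1 = qv k"
    using beta_expansion_first_digit[OF assms(2)] .
  have "1 < \<beta>" using assms(1) by simp
  then have "z \<notin> forbidden_region \<beta> k"
    using beta_expansion_first_digit_not_forbidden[OF _ assms(2) k(1)] k(2) by blast
  moreover have "z \<in> Ct \<beta> i j" using assms(4) by (simp add: Cset_def)
  ultimately have "k \<notin> {0,1,2} - {i, j}"
    using Ct_subset_forbidden_region[OF assms(1,3)] by blast
  then show ?thesis using k by auto
qed

theorem lemma6p4:
  fixes \<beta> :: real and z :: "real \<times> real" and a :: "nat \<Rightarrow> real \<times> real"
  assumes "3/2 < \<beta>" and "\<beta> \<le> beta_star"
    and "z \<in> attractor \<beta>"
    and "\<forall>i\<ge>1. a i \<in> {qv 0, qv 1, qv 2}"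
    and "(\<lambda>i. (1 / \<beta> ^ Suc i) *\<^sub>R a (Suc i)) sums z"
  shows "(\<forall>i\<in>{0,1,2}. z \<in> Eset \<beta> i \<longrightarrow> a 1 = qv i)
       \<and> (\<forall>(i, j)\<in>{(0,1),(1,2),(0,2)}. z \<in> Cset \<beta> i j \<longrightarrow> a 1 \<in> {qv i, qv j})"
proof -
  have expansion: "beta_expansion \<beta> a z"
    using assms(4,5) by (simp add: beta_expansion_def)
  have "1 < \<beta>" using assms(1) by simp
  then show ?thesis
    using beta_expansion_Eset_first_digit[OF _ expansion]
      beta_expansion_Cset_first_digit[OF assms(1) expansion] by blast
qed

end
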